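(* Let $p=(p_1(\cdot),\dots,p_N(\cdot))$ and $q=(q_1(\cdot),\dots,q_N(\cdot))$ be growth laws on $\mathcal O_N$, and let $(\eta(t))$, $(\sigma(t))$ be the ordered growth processes with laws $p$ and $q$ respectively. Assume that for all $\eta,\sigma\in\mathcal O_N$ with $\eta\prec\sigma$, $$\sum_{i=1}^k p_i(\eta)\le\sum_{i=1}^k q_i(\sigma)\qquad\text{for all }k=1,\dots,N.$$ Then, whenever $\eta(0),\sigma(0)\in\mathcal O_N$ satisfy $\eta(0)\prec\sigma(0)$, there is a coupling of the two processes such that $\eta(t)\prec\sigma(t)$ for all $t\ge0$.
   Context: $\mathcal O_N$ is the set of $\eta\in\mathbb N^N$ with $\eta_1\ge\dots\ge\eta_N$; for $\sigma\in\mathbb N^N$, $\bar\sigma$ is its nonincreasing rearrangement and $|\sigma|=\sum_i\sigma_i$. For $|\sigma|=|\eta|$, $\eta\prec\sigma$ (equivalently $\sigma\succ\eta$) means $\sum_{i=1}^k\bar\eta_i\le\sum_{i=1}^k\bar\sigma_i$ for all $k=1,\dots,N$. A growth law $p$ assigns to each $\eta\in\mathcal O_N$ a probability vector $(p_1(\eta),\dots,p_N(\eta))$. The ordered growth process with law $p$ is the Markov chain on $\mathcal O_N$ which, from state $\eta$, picks an index $J$ with $P(J=i)=p_i(\eta)$ and moves to $\overline{\eta+e_J}$ (the nonincreasing rearrangement of $\eta$ with one unit added at position $J$). *)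

theory Defs
  imports "HOL-Probability.Probability"
begin

text \<open>States are lists of naturals of length N (coordinates indexed 0..N-1,
  corresponding to 1..N in the paper).\<close>

definition rearr :: "nat list \<Rightarrow> nat list" where
  "rearr xs = rev (sort xs)"

definition ordered :: "nat \<Rightarrow> nat list set" where
  "ordered N = {xs. length xs = N \<and> sorted_wrt (\<ge>) xs}"

definition majorized :: "nat \<Rightarrow> nat list \<Rightarrow> nat list \<Rightarrow> bool" where
  "majorized N eta zeta \<longleftrightarrow> length eta = N \<and> length zeta = N \<and>
     sum_list eta = sum_list zeta \<and>
     (\<forall>k\<in>{1..N}. sum_list (take k (rearr eta)) \<le> sum_list (take k (rearr zeta)))"

definition growth_law :: "nat \<Rightarrow> (nat list \<Rightarrow> nat \<Rightarrow> real) \<Rightarrow> bool" where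
  "growth_law N p \<longleftrightarrow> (\<forall>eta\<in>ordered N. (\<forall>i<N. 0 \<le> p eta i) \<and> (\<Sum>i<N. p eta i) = 1)"

definition grow_trans :: "nat \<Rightarrow> (nat list \<Rightarrow> nat \<Rightarrow> real) \<Rightarrow> nat list \<Rightarrow> nat list \<Rightarrow> real" where
  "grow_trans N p eta eta' = (\<Sum>i\<in>{i. i < N \<and> rearr (eta[i := eta ! i + 1]) = eta'}. p eta i)"

text \<open>X is (under the probability measure M) an ordered growth process with law p started
  at eta0: all finite-dimensional cylinder events are measurable and have the Markov-chain
  probabilities.  This determines the law of the trajectory.\<close>
definition is_growth_process ::
  "nat \<Rightarrow> (nat list \<Rightarrow> nat \<Rightarrow> real) \<Rightarrow> nat list \<Rightarrow> 'w measure \<Rightarrow> ('w \<Rightarrow> nat \<Rightarrow> nat list) \<Rightarrow> bool" where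
  "is_growth_process N p eta0 M X \<longleftrightarrow>
     (\<forall>xs. xs \<noteq> [] \<longrightarrow>
        {w\<in>space M. \<forall>i<length xs. X w i = xs ! i} \<in> sets M \<and>
        measure M {w\<in>space M. \<forall>i<length xs. X w i = xs ! i} =
          (if hd xs = eta0 then (\<Prod>i<length xs - 1. grow_trans N p (xs ! i) (xs ! Suc i)) else 0))"

end

theory Submission
  imports Defs
begin

text \<open>Both processes are driven by the same i.i.d. uniform variables: at every step one
  uniform number \<open>u\<close> selects the growth index of each process by inverting the cumulative
  distribution of its law.  The hypothesis on the partial sums of the laws makes the index chosen
  for \<open>\<sigma>\<close> never larger than the one chosen for \<open>\<eta>\<close>.  Adding a unit at coordinate \<open>j\<close> of a
  nonincreasing vector and reordering amounts to adding it at the first coordinate of the block of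
  entries equal to the \<open>j\<close>-th one; comparing partial sums shows that \<open>\<eta> \<prec> \<sigma>\<close> is preserved when
  \<open>\<sigma>\<close> grows at a coordinate no larger than \<open>\<eta>\<close> does.  Hence majorization holds along every
  pair of coupled paths, and the cylinder probabilities of each path are those of the Markov chain.\<close>

section \<open>Growing a nonincreasing vector\<close>

lemma rearr_ordered: "length xs = N \<Longrightarrow> rearr xs \<in> ordered N"
  by (simp add: rearr_def ordered_def sorted_wrt_rev)

lemma rearr_eqI: "mset ys = mset xs \<Longrightarrow> sorted_wrt (\<ge>) ys \<Longrightarrow> rearr xs = ys"
  unfolding rearr_def by (metis properties_for_sort rev_rev_ident sorted_wrt_rev mset_rev)

lemma rearr_ordered_id: "xs \<in> ordered N \<Longrightarrow> rearr xs = xs"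
  by (rule rearr_eqI) (auto simp: ordered_def)

lemma ordered_nth_antimono: "x \<in> ordered N \<Longrightarrow> i \<le> j \<Longrightarrow> j < N \<Longrightarrow> x ! j \<le> x ! i"
  unfolding ordered_def
  by (cases "i = j") (auto intro: sorted_wrt_nth_less[where P = "(\<ge>)", simplified])

definition block_start :: "nat list \<Rightarrow> nat \<Rightarrow> nat" where
  "block_start x j = (LEAST i. x ! i = x ! j)"

lemma block_start_le: "block_start x j \<le> j"
  unfolding block_start_def by (rule Least_le) simp

lemma nth_block_start: "x ! block_start x j = x ! j"
  unfolding block_start_def by (rule LeastI) simp

lemma nth_less_block_start: "i < block_start x j \<Longrightarrow> x ! i \<noteq> x ! j"
  unfolding block_start_def using not_less_Least by blast

lemma nth_in_block:
  assumes "x \<in> ordered N" "j < N" "block_start x j \<le> i" "i \<le> j"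
  shows "x ! i = x ! j"
  using ordered_nth_antimono[OF assms(1), of "block_start x j" i]
    ordered_nth_antimono[OF assms(1), of i j] assms nth_block_start[of x j] by simp

lemma rearr_increment:
  assumes x: "x \<in> ordered N" and j: "j < N"
  shows "rearr (x[j := x ! j + 1]) = x[block_start x j := x ! block_start x j + 1]"
proof (rule rearr_eqI)
  let ?c = "block_start x j"
  have c: "?c < N" and len: "length x = N"
    using block_start_le[of x j] j x by (auto simp: ordered_def)
  show "mset (x[?c := x ! ?c + 1]) = mset (x[j := x ! j + 1])"
    using c j len by (simp add: mset_update nth_block_start)
  show "sorted_wrt (\<ge>) (x[?c := x ! ?c + 1])"
  proof (subst sorted_wrt_iff_nth_less, intro allI impI)
    fix a b assume ab: "a < b" "b < length (x[?c := x ! ?c + 1])"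
    have mono: "x ! b \<le> x ! a" using ordered_nth_antimono[OF x, of a b] ab len by simp
    have "x ! b < x ! a" if "b = ?c"
      using mono nth_less_block_start[of a x j] nth_block_start[of x j] ab that by fastforce
    then show "x[?c := x ! ?c + 1] ! b \<le> x[?c := x ! ?c + 1] ! a"
      using mono ab len by (cases "a = ?c"; cases "b = ?c") (auto simp: nth_list_update)
  qed
qed

definition prefix_sum :: "nat \<Rightarrow> nat list \<Rightarrow> nat" where
  "prefix_sum k x = (\<Sum>i<k. x ! i)"

lemma prefix_sum_0 [simp]: "prefix_sum 0 x = 0"
  by (simp add: prefix_sum_def)

lemma prefix_sum_Suc: "prefix_sum (Suc k) x = prefix_sum k x + x ! k"
  by (simp add: prefix_sum_def)

lemma sum_list_take_eq_prefix_sum: "k \<le> length x \<Longrightarrow> sum_list (take k x) = prefix_sum k x"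
  unfolding prefix_sum_def by (simp add: sum_list_sum_nth atLeast0LessThan min_absorb1)

lemma prefix_sum_increment:
  "j < length x \<Longrightarrow> prefix_sum k (x[j := x ! j + 1]) = prefix_sum k x + (if j < k then 1 else 0)"
  unfolding prefix_sum_def by (induction k) (auto simp: nth_list_update)

lemma majorized_ordered_iff:
  assumes "a \<in> ordered N" "b \<in> ordered N"
  shows "majorized N a b \<longleftrightarrow>
    prefix_sum N a = prefix_sum N b \<and> (\<forall>k\<in>{1..N}. prefix_sum k a \<le> prefix_sum k b)"
  using assms sum_list_take_eq_prefix_sum[of N a] sum_list_take_eq_prefix_sum[of N b]
  by (auto simp: majorized_def rearr_ordered_id ordered_def sum_list_take_eq_prefix_sum)

text \<open>Since \<open>a\<close> is constant on the block of \<open>J\<close>, equal prefix sums at \<open>k\<close> force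
  \<open>b ! (k - 1) = b ! k\<close>; so an equality inside the range could be carried up to the start of the
  block of \<open>K\<close> in \<open>b\<close>, where \<open>b\<close> strictly drops.\<close>

lemma prefix_sum_eq_propagates:
  assumes a: "a \<in> ordered N" and b: "b \<in> ordered N"
    and maj: "\<forall>k\<in>{1..N}. prefix_sum k a \<le> prefix_sum k b"
    and KJ: "K \<le> J" "J < N"
    and k: "block_start a J < k" "k \<le> block_start b K"
    and eq: "prefix_sum k a = prefix_sum k b"
  shows "k < block_start b K \<and> prefix_sum (Suc k) a = prefix_sum (Suc k) b"
proof -
  obtain m where m: "k = Suc m" using k by (cases k) auto
  have kN: "Suc k \<le> N" using k block_start_le[of b K] KJ by simp
  have "m = 0 \<or> m \<in> {1..N}" and "Suc k \<in> {1..N}" using kN m by auto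
  then have "prefix_sum m a \<le> prefix_sum m b" "prefix_sum (Suc k) a \<le> prefix_sum (Suc k) b"
    using maj by auto
  moreover note eq prefix_sum_Suc[of k a] prefix_sum_Suc[of k b]
  moreover have "prefix_sum k a = prefix_sum m a + a ! m" "prefix_sum k b = prefix_sum m b + b ! m"
    using m prefix_sum_Suc by simp_all
  ultimately have "b ! m \<le> a ! m" "a ! k \<le> b ! k" by linarith+
  moreover have "a ! m = a ! J" "a ! k = a ! J"
    using nth_in_block[OF a KJ(2), of m] nth_in_block[OF a KJ(2), of k] k m block_start_le[of b K] KJ
    by simp_all
  moreover have "b ! k \<le> b ! m" using ordered_nth_antimono[OF b, of m k] m kN by simp
  ultimately have bk: "b ! m = b ! k" "a ! k = b ! k" by simp_all
  have "k \<noteq> block_start b K"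
    using bk nth_less_block_start[of m b K] nth_block_start[of b K] m by auto
  then show ?thesis
    using k eq bk prefix_sum_Suc[of k a] prefix_sum_Suc[of k b] by simp
qed

lemma prefix_sum_less_between_blocks:
  assumes a: "a \<in> ordered N" and b: "b \<in> ordered N"
    and maj: "\<forall>k\<in>{1..N}. prefix_sum k a \<le> prefix_sum k b"
    and KJ: "K \<le> J" "J < N"
    and k: "block_start a J < k" "k \<le> block_start b K"
  shows "prefix_sum k a < prefix_sum k b"
  using k(2,1)
proof (induction k rule: inc_induct)
  case base
  have "prefix_sum (block_start b K) a \<le> prefix_sum (block_start b K) b"
    using maj base block_start_le[of b K] KJ by simp
  then show ?case
    using prefix_sum_eq_propagates[OF a b maj KJ base order_refl] by linarith
next
  case (step n)
  have "prefix_sum n a \<le> prefix_sum n b"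
    using maj step block_start_le[of b K] KJ by simp
  moreover have "prefix_sum n a \<noteq> prefix_sum n b"
    using prefix_sum_eq_propagates[OF a b maj KJ step(4)] step by fastforce
  ultimately show ?case by simp
qed

definition grow :: "nat list \<Rightarrow> nat \<Rightarrow> nat list" where
  "grow x i = rearr (x[i := x ! i + 1])"

lemma grow_ordered: "length x = N \<Longrightarrow> grow x i \<in> ordered N"
  unfolding grow_def by (rule rearr_ordered) simp

lemma majorized_grow:
  assumes a: "a \<in> ordered N" and b: "b \<in> ordered N" and maj: "majorized N a b"
    and KJ: "K \<le> J" "J < N"
  shows "majorized N (grow a J) (grow b K)"
proof -
  let ?ja = "block_start a J" and ?kb = "block_start b K"
  have len: "length a = N" "length b = N" using a b by (auto simp: ordered_def)
  have idx: "?ja < N" "?kb < N" using block_start_le[of a J] block_start_le[of b K] KJ by auto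
  have a': "rearr (a[J := a ! J + 1]) = a[?ja := a ! ?ja + 1]" by (rule rearr_increment[OF a KJ(2)])
  have b': "rearr (b[K := b ! K + 1]) = b[?kb := b ! ?kb + 1]"
    by (rule rearr_increment[OF b]) (use KJ in simp)
  have ordered': "a[?ja := a ! ?ja + 1] \<in> ordered N" "b[?kb := b ! ?kb + 1] \<in> ordered N"
    using a' b' rearr_ordered len by (metis length_list_update)+
  have sums: "prefix_sum N a = prefix_sum N b"
    and pre: "\<forall>k\<in>{1..N}. prefix_sum k a \<le> prefix_sum k b"
    using maj majorized_ordered_iff[OF a b] by auto
  have "prefix_sum k a + (if ?ja < k then 1 else 0) \<le> prefix_sum k b + (if ?kb < k then 1 else 0)"
    if "k \<in> {1..N}" for k
    using pre[rule_format, OF that] that prefix_sum_less_between_blocks[OF a b pre KJ, of k]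
    by (cases "?ja < k \<and> k \<le> ?kb") auto
  then show ?thesis
    unfolding grow_def a' b' majorized_ordered_iff[OF ordered'] using sums idx len
    by (simp add: prefix_sum_increment[simplified])
qed

section \<open>Inverse distribution function sampling\<close>

definition unit_uniform :: "real measure" where
  "unit_uniform = uniform_measure lborel {0..1}"

lemma prob_space_unit_uniform: "prob_space unit_uniform"
  unfolding unit_uniform_def by (rule prob_space_uniform_measure) auto

lemma sets_unit_uniform [measurable_cong]: "sets unit_uniform = sets borel"
  by (simp add: unit_uniform_def)

lemma space_unit_uniform [simp]: "space unit_uniform = UNIV"
  by (simp add: unit_uniform_def)

lemma measure_unit_uniform_less:
  assumes "0 \<le> c" "c \<le> 1"
  shows "measure unit_uniform {u. u < c} = c"
proof -
  have "measure unit_uniform {u. u < c} = measure lborel ({0..1} \<inter> {u. u < c}) / measure lborel {0..1::real}"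
    unfolding unit_uniform_def by (rule measure_uniform_measure) auto
  also have "{0..1} \<inter> {u. u < c} = {0..<c}" using assms by auto
  finally show ?thesis using assms by simp
qed

definition sample_index :: "nat \<Rightarrow> (nat \<Rightarrow> real) \<Rightarrow> real \<Rightarrow> nat" where
  "sample_index N w u = card {k\<in>{1..<N}. (\<Sum>i<k. w i) \<le> u}"

lemma measurable_sample_index [measurable]: "sample_index N w \<in> borel \<rightarrow>\<^sub>M count_space UNIV"
proof -
  have "sample_index N w = (\<lambda>u. \<Sum>k\<in>{1..<N}. of_bool ((\<Sum>i<k. w i) \<le> u))"
    by (auto simp: sample_index_def Int_def)
  then show ?thesis by simp
qed

lemma sample_index_le: "sample_index N w u \<le> N - 1"
proof -
  have "sample_index N w u \<le> card {1..<N}"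
    unfolding sample_index_def by (rule card_mono) auto
  then show ?thesis by simp
qed

lemma sample_index_mono:
  assumes "\<forall>k\<in>{1..<N}. (\<Sum>i<k. w i) \<le> (\<Sum>i<k. v i)"
  shows "sample_index N v u \<le> sample_index N w u"
  unfolding sample_index_def by (rule card_mono) (use assms in force)+

lemma sample_index_le_iff:
  assumes nonneg: "\<forall>i<N. 0 \<le> w i" and j: "j < N"
  shows "sample_index N w u \<le> j \<longleftrightarrow> N - 1 \<le> j \<or> u < (\<Sum>i<Suc j. w i)"
proof -
  let ?S = "{k\<in>{1..<N}. (\<Sum>i<k. w i) \<le> u}"
  have cum_mono: "(\<Sum>i<k. w i) \<le> (\<Sum>i<k'. w i)" if "k \<le> k'" "k' \<le> N" for k k'
    by (rule sum_mono2) (use that nonneg in auto)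
  have "card ?S \<le> N - 1" using sample_index_le unfolding sample_index_def .
  moreover have "Suc j \<le> card ?S" if "j < N - 1" "(\<Sum>i<Suc j. w i) \<le> u"
    using card_mono[of ?S "{1..Suc j}"] that cum_mono by fastforce
  moreover have "card ?S \<le> j" if "u < (\<Sum>i<Suc j. w i)"
  proof -
    have "?S \<subseteq> {1..j}"
      using that cum_mono[of "Suc j"] by (force simp: not_less_eq_eq[symmetric])
    then show ?thesis using card_mono[of "{1..j}" ?S] by simp
  qed
  ultimately show ?thesis unfolding sample_index_def by fastforce
qed

lemma measure_sample_index_le:
  assumes nonneg: "\<forall>i<N. 0 \<le> w i" and total: "(\<Sum>i<N. w i) = 1" and j: "j < N"
  shows "measure unit_uniform {u. sample_index N w u \<le> j} = (\<Sum>i<Suc j. w i)"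
proof (cases "N - 1 \<le> j")
  case True
  then have "{u. sample_index N w u \<le> j} = space unit_uniform"
    using sample_index_le[of N w] True by (auto intro: le_trans)
  moreover have "Suc j = N" using True j by simp
  ultimately show ?thesis
    using prob_space.prob_space[OF prob_space_unit_uniform] total by simp
next
  case False
  have "(\<Sum>i<Suc j. w i) \<le> (\<Sum>i<N. w i)" by (rule sum_mono2) (use j nonneg in auto)
  moreover have "0 \<le> (\<Sum>i<Suc j. w i)" by (rule sum_nonneg) (use j nonneg in auto)
  ultimately show ?thesis
    using False sample_index_le_iff[OF nonneg j] measure_unit_uniform_less total by simp
qed

lemma measure_sample_index_eq:
  assumes nonneg: "\<forall>i<N. 0 \<le> w i" and total: "(\<Sum>i<N. w i) = 1" and j: "j < N"
  shows "measure unit_uniform {u. sample_index N w u = j} = w j"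
proof (cases j)
  case 0
  then show ?thesis using measure_sample_index_le[OF nonneg total j] by simp
next
  case (Suc i)
  interpret prob_space unit_uniform by (rule prob_space_unit_uniform)
  have "{u. sample_index N w u = j} = {u. sample_index N w u \<le> j} - {u. sample_index N w u \<le> i}"
    using Suc by auto
  also have "measure unit_uniform \<dots> =
      measure unit_uniform {u. sample_index N w u \<le> j} - measure unit_uniform {u. sample_index N w u \<le> i}"
    by (rule finite_measure_Diff) (use Suc in auto)
  finally show ?thesis
    using measure_sample_index_le[OF nonneg total] j Suc by simp
qed

section \<open>Markov chains driven by i.i.d. innovations\<close>

fun trajectory :: "('s \<Rightarrow> 'a \<Rightarrow> 's) \<Rightarrow> 's \<Rightarrow> 'a stream \<Rightarrow> nat \<Rightarrow> 's" where
  "trajectory f x \<omega> 0 = x"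
| "trajectory f x \<omega> (Suc n) = trajectory f (f x (shd \<omega>)) (stl \<omega>) n"

context prob_space
begin

lemma measurable_trajectory:
  fixes f :: "'s::countable \<Rightarrow> 'a \<Rightarrow> 's"
  assumes f: "\<And>x. f x \<in> M \<rightarrow>\<^sub>M count_space UNIV"
  shows "(\<lambda>\<omega>. trajectory f x \<omega> n) \<in> stream_space M \<rightarrow>\<^sub>M count_space UNIV"
proof (induction n arbitrary: x)
  case (Suc n)
  have "(\<lambda>\<omega>. trajectory f y (stl \<omega>) n) \<in> stream_space M \<rightarrow>\<^sub>M count_space UNIV" for y
    using measurable_compose[OF measurable_stl Suc.IH] by simp
  moreover have "(\<lambda>\<omega>. f x (shd \<omega>)) \<in> stream_space M \<rightarrow>\<^sub>M count_space UNIV"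
    using measurable_compose[OF measurable_shd f] by simp
  ultimately show ?case
    by (simp add: measurable_compose_countable'[where I = UNIV and f = "\<lambda>y \<omega>. trajectory f y (stl \<omega>) n"])
qed simp

lemma measure_trajectory_cylinder:
  fixes f :: "'s::countable \<Rightarrow> 'a \<Rightarrow> 's" and S :: "'s set"
  assumes f: "\<And>x. f x \<in> M \<rightarrow>\<^sub>M count_space UNIV"
    and invariant: "\<And>x u. x \<in> S \<Longrightarrow> u \<in> space M \<Longrightarrow> f x u \<in> S"
    and kernel: "\<And>x y. x \<in> S \<Longrightarrow> measure M {u \<in> space M. f x u = y} = K x y"
    and "x \<in> S" "xs \<noteq> []"
  shows "measure (stream_space M) {\<omega> \<in> space (stream_space M). \<forall>i<length xs. trajectory f x \<omega> i = xs ! i} =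
    (if hd xs = x then \<Prod>i<length xs - 1. K (xs ! i) (xs ! Suc i) else 0)"
proof -
  interpret S: prob_space "stream_space M" by (rule prob_space_stream_space)
  note [measurable] = f measurable_trajectory[OF f]
  define cyl where "cyl x xs = {\<omega> \<in> space (stream_space M). \<forall>i<length xs. trajectory f x \<omega> i = xs ! i}"
    for x xs
  have cyl_sets: "cyl x xs \<in> sets (stream_space M)" for x xs
    unfolding cyl_def by measurable
  have "measure (stream_space M) (cyl x xs) =
    (if hd xs = x then \<Prod>i<length xs - 1. K (xs ! i) (xs ! Suc i) else 0)"
    using assms(4,5)
  proof (induction xs arbitrary: x)
    case (Cons y ys)
    show ?case
    proof (cases "x = y")
      case False
      then have "cyl x (y # ys) = {}" by (auto simp: cyl_def)
      then show ?thesis using False by simp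
    next
      case [simp]: True
      show ?thesis
      proof (cases ys)
        case Nil
        then show ?thesis using S.prob_space by (simp add: cyl_def)
      next
        case ys: (Cons z zs)
        let ?P = "\<Prod>i<length zs. K ((z # zs) ! i) ((z # zs) ! Suc i)"
        have IH: "measure (stream_space M) (cyl x' (z # zs)) = (if z = x' then ?P else 0)"
          if "x' \<in> S" for x'
          using Cons.IH[OF that] ys by simp
        have shift:
          "{\<omega> \<in> space (stream_space M). t ## \<omega> \<in> cyl x (y # ys)} = cyl (f x t) (z # zs)"
          if "t \<in> space M" for t
          unfolding cyl_def using ys that
          by (simp only: length_Cons All_less_Suc2) (auto simp: stream_space_Stream)
        have "emeasure (stream_space M) (cyl x (y # ys)) =
            (\<integral>\<^sup>+t. emeasure (stream_space M) (cyl (f x t) (z # zs)) \<partial>M)"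
          using shift by (subst emeasure_stream_space) (auto simp: cyl_sets intro!: nn_integral_cong)
        also have "\<dots> = (\<integral>\<^sup>+t. ennreal ?P * indicator {t \<in> space M. f x t = z} t \<partial>M)"
          using Cons.prems(1)
          by (intro nn_integral_cong) (auto simp: S.emeasure_eq_measure IH invariant split: split_indicator)
        also have "\<dots> = ennreal ?P * ennreal (K x z)"
          using Cons.prems(1) by (simp add: nn_integral_cmult_indicator emeasure_eq_measure kernel)
        finally have em: "emeasure (stream_space M) (cyl x (y # ys)) = ennreal ?P * ennreal (K x z)" .
        have K_nonneg: "0 \<le> K x z"
          using kernel[OF Cons.prems(1), of z] by (metis measure_nonneg)
        have "0 \<le> ?P \<or> K x z = 0"
        proof (cases "z \<in> S")
          case True
          then show ?thesis using IH[OF True] by (metis measure_nonneg)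
        next
          case False
          then have "{u \<in> space M. f x u = z} = {}" using invariant Cons.prems(1) by auto
          then show ?thesis using kernel[OF Cons.prems(1), of z] by (metis measure_empty)
        qed
        then have "measure (stream_space M) (cyl x (y # ys)) = ?P * K x z"
          using em K_nonneg by (auto simp: measure_def ennreal_mult''[symmetric])
        then show ?thesis
          using ys by (simp add: prod.lessThan_Suc_shift mult.commute del: prod.lessThan_Suc)
      qed
    qed
  qed simp
  then show ?thesis by (simp add: cyl_def)
qed

end

section \<open>The coupled growth processes\<close>

lemma growth_law_pos: "growth_law N p \<Longrightarrow> 0 < N"
  unfolding growth_law_def by (rule ccontr) (auto simp: ordered_def)

definition growth_step :: "nat \<Rightarrow> (nat list \<Rightarrow> nat \<Rightarrow> real) \<Rightarrow> nat list \<Rightarrow> real \<Rightarrow> nat list" where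
  "growth_step N p x u = grow x (sample_index N (p x) u)"

lemma measurable_growth_step [measurable]: "growth_step N p x \<in> borel \<rightarrow>\<^sub>M count_space UNIV"
  unfolding growth_step_def by (rule measurable_compose[OF measurable_sample_index]) simp

lemma measurable_growth_step_uniform: "growth_step N p x \<in> unit_uniform \<rightarrow>\<^sub>M count_space UNIV"
  using measurable_growth_step by (simp add: measurable_cong_sets[OF sets_unit_uniform refl])

lemma measurable_growth_trajectory [measurable]:
  "(\<lambda>\<omega>. trajectory (growth_step N p) x \<omega> n) \<in> stream_space unit_uniform \<rightarrow>\<^sub>M count_space UNIV"
  by (rule prob_space.measurable_trajectory[OF prob_space_unit_uniform measurable_growth_step_uniform])

lemma growth_step_ordered: "x \<in> ordered N \<Longrightarrow> growth_step N p x u \<in> ordered N"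
  unfolding growth_step_def by (rule grow_ordered) (simp add: ordered_def)

lemma measure_growth_step:
  assumes p: "growth_law N p" and x: "x \<in> ordered N"
  shows "measure unit_uniform {u. growth_step N p x u = y} = grow_trans N p x y"
proof -
  interpret prob_space unit_uniform by (rule prob_space_unit_uniform)
  let ?I = "{i. i < N \<and> grow x i = y}"
  have "{u. growth_step N p x u = y} = (\<Union>i\<in>?I. {u. sample_index N (p x) u = i})"
  proof -
    have "sample_index N (p x) u < N" for u
      using sample_index_le[of N "p x" u] growth_law_pos[OF p] by linarith
    then show ?thesis by (auto simp: growth_step_def)
  qed
  then have "measure unit_uniform {u. growth_step N p x u = y} =
      (\<Sum>i\<in>?I. measure unit_uniform {u. sample_index N (p x) u = i})"
    by (simp only:) (rule finite_measure_finite_Union; auto simp: disjoint_family_on_def)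
  also have "\<dots> = (\<Sum>i\<in>?I. p x i)"
    using p x by (intro sum.cong) (auto simp: growth_law_def measure_sample_index_eq)
  finally show ?thesis by (simp add: grow_trans_def grow_def)
qed

lemma growth_step_majorized:
  assumes "growth_law N p" "eta \<in> ordered N" "zeta \<in> ordered N" "majorized N eta zeta"
    and dominated: "\<forall>k\<in>{1..N}. (\<Sum>i<k. p eta i) \<le> (\<Sum>i<k. q zeta i)"
  shows "majorized N (growth_step N p eta u) (growth_step N q zeta u)"
proof -
  have "sample_index N (q zeta) u \<le> sample_index N (p eta) u"
    by (rule sample_index_mono) (use dominated in auto)
  moreover have "sample_index N (p eta) u < N"
    using sample_index_le[of N "p eta" u] growth_law_pos[OF assms(1)] by linarith
  ultimately show ?thesis
    unfolding growth_step_def using majorized_grow assms(2-4) by blast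
qed

lemma trajectory_majorized:
  assumes "growth_law N p"
    and dominated: "\<forall>eta\<in>ordered N. \<forall>zeta\<in>ordered N. majorized N eta zeta \<longrightarrow>
           (\<forall>k\<in>{1..N}. (\<Sum>i<k. p eta i) \<le> (\<Sum>i<k. q zeta i))"
    and "eta \<in> ordered N" "zeta \<in> ordered N" "majorized N eta zeta"
  shows "majorized N (trajectory (growth_step N p) eta \<omega> t) (trajectory (growth_step N q) zeta \<omega> t)"
  using assms(3-5)
proof (induction t arbitrary: eta zeta \<omega>)
  case (Suc t)
  have "majorized N (growth_step N p eta (shd \<omega>)) (growth_step N q zeta (shd \<omega>))"
    using growth_step_majorized[OF assms(1) Suc.prems] dominated Suc.prems by blast
  then show ?case
    using Suc.IH growth_step_ordered Suc.prems by simp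
qed simp

lemma is_growth_process_trajectory:
  assumes p: "growth_law N p" and x0: "x0 \<in> ordered N"
  shows "is_growth_process N p x0 (stream_space unit_uniform) (trajectory (growth_step N p) x0)"
proof -
  interpret prob_space unit_uniform by (rule prob_space_unit_uniform)
  have kernel:
    "measure unit_uniform {u \<in> space unit_uniform. growth_step N p x u = y} = grow_trans N p x y"
    if "x \<in> ordered N" for x y
    using measure_growth_step[OF p that] by simp
  show ?thesis
    unfolding is_growth_process_def
    using measure_trajectory_cylinder[OF measurable_growth_step_uniform growth_step_ordered kernel x0]
    by simp
qed

lemma is_growth_process_distr:
  assumes X_f: "is_growth_process N p x0 M (\<lambda>w. X (f w))" and f: "f \<in> M \<rightarrow>\<^sub>M M'"
    and X[measurable]: "\<And>i. (\<lambda>w. X w i) \<in> M' \<rightarrow>\<^sub>M count_space UNIV"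
  shows "is_growth_process N p x0 (distr M M' f) X"
  unfolding is_growth_process_def
proof (intro allI impI conjI)
  fix xs :: "nat list list"
  assume "xs \<noteq> []"
  let ?A = "{w \<in> space M'. \<forall>i<length xs. X w i = xs ! i}"
  have A: "?A \<in> sets M'" by measurable
  then show "{w \<in> space (distr M M' f). \<forall>i<length xs. X w i = xs ! i} \<in> sets (distr M M' f)"
    by simp
  have "f -` ?A \<inter> space M = {w \<in> space M. \<forall>i<length xs. X (f w) i = xs ! i}"
    using measurable_space[OF f] by auto
  then have "measure (distr M M' f) ?A = measure M {w \<in> space M. \<forall>i<length xs. X (f w) i = xs ! i}"
    by (simp add: measure_distr[OF f A])
  also have "\<dots> = (if hd xs = x0 then \<Prod>i<length xs - 1. grow_trans N p (xs ! i) (xs ! Suc i) else 0)"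
    using X_f \<open>xs \<noteq> []\<close> unfolding is_growth_process_def by blast
  finally show "measure (distr M M' f) {w \<in> space (distr M M' f). \<forall>i<length xs. X w i = xs ! i} =
      (if hd xs = x0 then \<Prod>i<length xs - 1. grow_trans N p (xs ! i) (xs ! Suc i) else 0)"
    by simp
qed

theorem proposition3p1:
  fixes N :: nat and p q :: "nat list \<Rightarrow> nat \<Rightarrow> real" and eta0 zeta0 :: "nat list"
  assumes "growth_law N p" and "growth_law N q"
    and "\<forall>eta\<in>ordered N. \<forall>zeta\<in>ordered N. majorized N eta zeta \<longrightarrow>
           (\<forall>k\<in>{1..N}. (\<Sum>i<k. p eta i) \<le> (\<Sum>i<k. q zeta i))"
    and "eta0 \<in> ordered N" and "zeta0 \<in> ordered N" and "majorized N eta0 zeta0"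
  shows "\<exists>M :: ((nat \<Rightarrow> nat list) \<times> (nat \<Rightarrow> nat list)) measure.
           prob_space M \<and>
           is_growth_process N p eta0 M fst \<and>
           is_growth_process N q zeta0 M snd \<and>
           (AE w in M. \<forall>t. majorized N (fst w t) (snd w t))"
proof -
  let ?U = "stream_space unit_uniform"
  let ?T = "\<Pi>\<^sub>M t\<in>UNIV. count_space (UNIV :: nat list set)"
  define coupling where
    "coupling \<omega> = (trajectory (growth_step N p) eta0 \<omega>, trajectory (growth_step N q) zeta0 \<omega>)" for \<omega>
  have "trajectory (growth_step N r) x \<in> ?U \<rightarrow>\<^sub>M ?T" for r x
    by (rule measurable_PiM_single'[where f = "\<lambda>n \<omega>. trajectory (growth_step N r) x \<omega> n"])
       (simp_all add: space_PiM)
  then have coupling[measurable]: "coupling \<in> ?U \<rightarrow>\<^sub>M ?T \<Otimes>\<^sub>M ?T"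
    unfolding coupling_def by measurable
  define M where "M = distr ?U (?T \<Otimes>\<^sub>M ?T) coupling"
  have "prob_space M"
    unfolding M_def
    by (rule prob_space.prob_space_distr[OF prob_space.prob_space_stream_space[OF prob_space_unit_uniform]
          coupling])
  moreover have "is_growth_process N p eta0 M fst" "is_growth_process N q zeta0 M snd"
    unfolding M_def using is_growth_process_trajectory assms(1,2,4,5)
    by (auto intro!: is_growth_process_distr simp: coupling_def)
  moreover have "AE w in M. \<forall>t. majorized N (fst w t) (snd w t)"
    unfolding M_def using trajectory_majorized[OF assms(1,3-6)]
    by (subst AE_distr_iff) (auto simp: coupling_def)
  ultimately show ?thesis by blast
qed

end
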